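(* For every $n\ge1$, \[S_{1,0}(2n)=0,\qquad S_{1,0}(2n-1)=\frac{B_{2n}}{n},\qquad S_{2,0}(2n)=-\frac{B_{2n}}{2n}.\]
   Context: $B_m$ denotes the $m$-th Bernoulli number ($B_2=\tfrac16$, $B_4=-\tfrac1{30}$, ...). Let $a_0,a_1,\dots$ be indeterminates and $a(x)=\sum_{i\ge0}a_ix^i$. For a positive integer $j$ set $G(x)=\prod_{i=0}^{j-1}\frac{1+a(x)x^2}{1+ix}$, $H(x)=\prod_{i=1-j}^{-1}\frac{1+ix}{1+a(x)x^2}$, $u=2j-1$, $v=j(j-1)$. For each $n\ge1$ there are unique polynomials $S_0(n),\dots,S_n(n)\in\mathbb{Q}[a_0,\dots,a_{n-2}]$, independent of $j$, such that for every positive integer $j$ the coefficient of $x^{n-1}$ in $\frac{G(x)-H(x)}{x^2}(1+a(x)x^2)$ equals $u\big(a_{n-1}+S_0(n)+\sum_{i=1}^nS_i(n)v^i\big)$. For $1\le i\le n$, $S_{i,0}(n)\in\mathbb{Q}$ denotes the constant term of $S_i(n)$. *)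

theory Defs
  imports "HOL-Computational_Algebra.Formal_Power_Series"
begin

text \<open>Bernoulli numbers with B_0 = 1, B_1 = -1/2 (only even indices are used).\<close>
fun bernoulli :: "nat \<Rightarrow> rat" where
  "bernoulli m = (if m = 0 then 1
     else - (\<Sum>k<m. of_nat (Suc m choose k) * bernoulli k) / of_nat (Suc m))"

text \<open>a(x) = sum a_i x^i for a concrete assignment of the indeterminates.\<close>
definition a_fps :: "(nat \<Rightarrow> rat) \<Rightarrow> rat fps" where
  "a_fps a = Abs_fps a"

definition G_fps :: "(nat \<Rightarrow> rat) \<Rightarrow> nat \<Rightarrow> rat fps" where
  "G_fps a j = (\<Prod>i<j. (1 + a_fps a * fps_X ^ 2) * inverse (1 + of_nat i * fps_X))"

text \<open>Product over i = 1-j, ..., -1, written with k = -i in {1..j-1}.\<close>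
definition H_fps :: "(nat \<Rightarrow> rat) \<Rightarrow> nat \<Rightarrow> rat fps" where
  "H_fps a j = (\<Prod>k\<in>{1..<j}. (1 - of_nat k * fps_X) * inverse (1 + a_fps a * fps_X ^ 2))"

text \<open>(G(x) - H(x))/x^2 * (1 + a(x) x^2); G - H is divisible by x^2.\<close>
definition E_fps :: "(nat \<Rightarrow> rat) \<Rightarrow> nat \<Rightarrow> rat fps" where
  "E_fps a j = fps_shift 2 (G_fps a j - H_fps a j) * (1 + a_fps a * fps_X ^ 2)"

text \<open>c i plays the role of the constant term S_{i,0}(n) (c 0 that of S_0(n)):
  the defining identity specialised at a_0 = a_1 = ... = 0.\<close>
definition S_const_coeffs :: "nat \<Rightarrow> (nat \<Rightarrow> rat) \<Rightarrow> bool" where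
  "S_const_coeffs n c \<longleftrightarrow>
     (\<forall>j::nat. j \<ge> 1 \<longrightarrow>
        fps_nth (E_fps (\<lambda>_. 0) j) (n - 1) =
          (2 * of_nat j - 1) * (0 + c 0 + (\<Sum>i=1..n. c i * (of_nat j * (of_nat j - 1)) ^ i)))"

end

theory Submission
  imports Defs "HOL-Computational_Algebra.Polynomial"
begin

text \<open>At a = 0 the logarithmic derivatives of G and H have as coefficients, up to sign,
  the power sums of the i^(r+1) over i < j. These are Faulhaber polynomials in j, whose linear
  coefficients are Bernoulli numbers. Solving S' = S w coefficientwise, every coefficient of G and
  of H is a polynomial in j, and the substitution j \<mapsto> 1 - j carries those of G to those of H.
  Hence the coefficient of x^(N-1) in E is a polynomial D(j) of degree at most 2N + 2 with
  D(1 - j) = -D(j), so D(j) = (2j - 1) Q(j(j - 1)) and the S_{i,0}(N) are the coefficients of Q.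
  They are read off from the linear and quadratic coefficients of D, in which only products of
  two Bernoulli numbers occur; those with an odd index at least 3 vanish.\<close>

unbundle fps_syntax

lemma poly_eq_0_if_roots_inj:
  fixes p :: "'a :: idom poly" and f :: "nat \<Rightarrow> 'a"
  assumes "inj f" and "\<And>j. poly p (f j) = 0"
  shows "p = 0"
proof (rule ccontr)
  assume "p \<noteq> 0"
  then have "finite {x. poly p x = 0}" by (rule poly_roots_finite)
  moreover have "range f \<subseteq> {x. poly p x = 0}" using assms(2) by auto
  ultimately show False
    using range_inj_infinite[OF assms(1)] finite_subset by blast
qed

lemma poly_eq_0_if_nat_roots:
  fixes p :: "'a :: {idom, ring_char_0} poly"
  assumes "\<And>j. poly p (of_nat j) = 0"
  shows "p = 0"
  using poly_eq_0_if_roots_inj[of of_nat p] assms by (simp add: inj_of_nat)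

lemma coeff_mult_1: "coeff (p * q) (Suc 0) = coeff p 0 * coeff q (Suc 0) + coeff p (Suc 0) * coeff q 0"
  by (simp add: coeff_mult atMost_Suc add.commute)

lemma coeff_mult_2:
  "coeff (p * q) 2 = coeff p 0 * coeff q 2 + coeff p 1 * coeff q 1 + coeff p 2 * coeff q 0"
  by (simp add: coeff_mult atMost_Suc numeral_2_eq_2 ac_simps)

lemma poly_eq_sum_coeffs:
  fixes Q :: "'a :: comm_semiring_1 poly"
  assumes "degree Q \<le> N"
  shows "poly Q y = coeff Q 0 + (\<Sum>i=1..N. coeff Q i * y ^ i)"
proof -
  have "poly Q y = (\<Sum>i\<le>degree Q. coeff Q i * y ^ i)"
    by (rule poly_altdef)
  also have "\<dots> = (\<Sum>i\<le>N. coeff Q i * y ^ i)"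
    using assms by (intro sum.mono_neutral_left) (auto simp: coeff_eq_0)
  also have "\<dots> = coeff Q 0 + (\<Sum>i=1..N. coeff Q i * y ^ i)"
    by (simp add: atMost_atLeast0 sum.atLeast_Suc_atMost)
  finally show ?thesis .
qed

lemma fps_prod_nth_0: "(\<Prod>i\<in>A. f i) $ 0 = (\<Prod>i\<in>A. f i $ 0)"
  by (induction A rule: infinite_finite_induct) simp_all

lemma fps_deriv_prod_logderiv:
  fixes f w :: "'i \<Rightarrow> 'a :: comm_ring_1 fps"
  assumes "finite A" and "\<And>i. i \<in> A \<Longrightarrow> fps_deriv (f i) = f i * w i"
  shows "fps_deriv (\<Prod>i\<in>A. f i) = (\<Prod>i\<in>A. f i) * (\<Sum>i\<in>A. w i)"
  using assms by (induction A rule: finite_induct) (simp_all add: algebra_simps)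

lemma fps_deriv_inverse_logderiv:
  fixes f w :: "'a :: field fps"
  assumes "f $ 0 \<noteq> 0" and "fps_deriv f = f * w"
  shows "fps_deriv (inverse f) = inverse f * - w"
proof -
  have "fps_deriv (inverse f) = - (inverse f * f) * w * inverse f"
    unfolding fps_inverse_deriv[OF assms(1)] assms(2) by (simp add: power2_eq_square algebra_simps)
  then show ?thesis using inverse_mult_eq_1[OF assms(1)] by simp
qed

lemma fps_deriv_linear_logderiv:
  fixes c :: "'a :: comm_ring_1"
  shows "fps_deriv (1 + fps_const c * fps_X)
    = (1 + fps_const c * fps_X) * Abs_fps (\<lambda>r. - ((- c) ^ Suc r))"
proof (rule fps_ext)
  fix n
  show "fps_deriv (1 + fps_const c * fps_X) $ n
    = ((1 + fps_const c * fps_X) * Abs_fps (\<lambda>r. - ((- c) ^ Suc r))) $ n"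
    by (cases n) (simp_all add: distrib_right mult.assoc)
qed

section \<open>Power series with a prescribed logarithmic derivative\<close>

text \<open>The coefficients of exp(\<integral>w) when those of w are polynomials W r in a parameter:
  (m + 1) S_(m+1) is the sum of the S_i w_(m-i) over i \<le> m.\<close>

fun exp_int_poly :: "(nat \<Rightarrow> 'a :: field_char_0 poly) \<Rightarrow> nat \<Rightarrow> 'a poly" where
  "exp_int_poly W 0 = 1"
| "exp_int_poly W (Suc m) = smult (1 / of_nat (Suc m)) (\<Sum>i=0..m. exp_int_poly W i * W (m - i))"

declare exp_int_poly.simps(2) [simp del]

lemma poly_exp_int_poly:
  fixes S w :: "'a :: field_char_0 fps"
  assumes "S $ 0 = 1" and "fps_deriv S = S * w" and "\<And>r. poly (W r) x = w $ r"
  shows "poly (exp_int_poly W m) x = S $ m"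
proof (induction m rule: less_induct)
  case (less m)
  show ?case
  proof (cases m)
    case 0
    then show ?thesis using assms(1) by simp
  next
    case (Suc m')
    have "of_nat (Suc m') * S $ Suc m' = fps_deriv S $ m'"
      by (simp add: mult.commute)
    also have "\<dots> = (\<Sum>i=0..m'. S $ i * w $ (m' - i))"
      using assms(2) by (simp add: fps_mult_nth)
    also have "\<dots> = (\<Sum>i=0..m'. poly (exp_int_poly W i) x * poly (W (m' - i)) x)"
      using less Suc assms(3) by (intro sum.cong) auto
    finally have recurrence: "of_nat (Suc m') * S $ Suc m'
        = (\<Sum>i=0..m'. poly (exp_int_poly W i) x * poly (W (m' - i)) x)" .
    have "poly (exp_int_poly W (Suc m')) x
        = (\<Sum>i=0..m'. poly (exp_int_poly W i) x * poly (W (m' - i)) x) / of_nat (Suc m')"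
      by (simp add: exp_int_poly.simps(2) poly_sum divide_inverse mult.commute del: of_nat_Suc)
    also have "\<dots> = S $ Suc m'"
      using recurrence by (simp add: field_simps del: of_nat_Suc)
    finally show ?thesis using Suc by simp
  qed
qed

lemma pcompose_exp_int_poly:
  assumes "\<And>r. pcompose (W r) q = W' r"
  shows "pcompose (exp_int_poly W m) q = exp_int_poly W' m"
proof (induction m rule: less_induct)
  case (less m)
  show ?case
  proof (cases m)
    case (Suc m')
    have "(\<Sum>i=0..m'. pcompose (exp_int_poly W i) q * pcompose (W (m' - i)) q)
        = (\<Sum>i=0..m'. exp_int_poly W' i * W' (m' - i))"
      using less Suc assms by (intro sum.cong) auto
    then show ?thesis
      using Suc by (simp add: exp_int_poly.simps(2) pcompose_smult pcompose_sum pcompose_mult)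
  qed (simp add: pcompose_1)
qed

lemma degree_exp_int_poly:
  assumes "\<And>r. degree (W r) \<le> r + 2"
  shows "degree (exp_int_poly W m) \<le> 2 * m"
proof (induction m rule: less_induct)
  case (less m)
  show ?case
  proof (cases m)
    case (Suc m')
    have "degree (\<Sum>i=0..m'. exp_int_poly W i * W (m' - i)) \<le> 2 * m"
    proof (rule degree_sum_le)
      fix i assume i: "i \<in> {0..m'}"
      have "degree (exp_int_poly W i * W (m' - i)) \<le> degree (exp_int_poly W i) + degree (W (m' - i))"
        by (rule degree_mult_le)
      also have "\<dots> \<le> 2 * i + (m' - i + 2)"
        using less[of i] assms[of "m' - i"] i Suc by (intro add_mono) auto
      also have "\<dots> \<le> 2 * m" using i Suc by auto
      finally show "degree (exp_int_poly W i * W (m' - i)) \<le> 2 * m" .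
    qed simp
    then show ?thesis
      using Suc by (simp add: exp_int_poly.simps(2))
  qed simp
qed

lemma coeff_0_exp_int_poly:
  assumes "\<And>r. coeff (W r) 0 = 0"
  shows "coeff (exp_int_poly W m) 0 = (if m = 0 then 1 else 0)"
  by (cases m) (simp_all add: exp_int_poly.simps(2) coeff_sum assms coeff_mult)

lemma coeff_1_exp_int_poly:
  assumes "\<And>r. coeff (W r) 0 = 0"
  shows "coeff (exp_int_poly W (Suc m)) 1 = coeff (W m) 1 / of_nat (Suc m)"
proof -
  have "coeff (\<Sum>i=0..m. exp_int_poly W i * W (m - i)) 1
      = (\<Sum>i=0..m. if i = 0 then coeff (W (m - i)) 1 else 0)"
    unfolding coeff_sum by (intro sum.cong) (auto simp: coeff_mult_1 coeff_0_exp_int_poly assms)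
  also have "\<dots> = coeff (W m) 1" by (subst sum.delta) auto
  finally show ?thesis
    by (simp add: exp_int_poly.simps(2) divide_inverse mult.commute del: of_nat_Suc)
qed

lemma coeff_2_exp_int_poly:
  assumes "\<And>r. coeff (W r) 0 = 0"
  shows "coeff (exp_int_poly W (Suc m)) 2
    = (coeff (W m) 2 + (\<Sum>i=0..m. coeff (exp_int_poly W i) 1 * coeff (W (m - i)) 1)) / of_nat (Suc m)"
proof -
  have "coeff (\<Sum>i=0..m. exp_int_poly W i * W (m - i)) 2
      = (\<Sum>i=0..m. (if i = 0 then coeff (W (m - i)) 2 else 0)
          + coeff (exp_int_poly W i) 1 * coeff (W (m - i)) 1)"
    unfolding coeff_sum by (intro sum.cong) (auto simp: coeff_mult_2 coeff_0_exp_int_poly assms)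
  also have "\<dots> = coeff (W m) 2 + (\<Sum>i=0..m. coeff (exp_int_poly W i) 1 * coeff (W (m - i)) 1)"
    by (simp add: sum.distrib)
  finally show ?thesis
    by (simp add: exp_int_poly.simps(2) divide_inverse mult.commute del: of_nat_Suc)
qed

section \<open>Polynomials anti-invariant under the reflection x \<mapsto> 1 - x\<close>

lemma reflection_invariant_poly:
  fixes K :: "'a :: idom poly"
  assumes "pcompose K [:1, -1:] = K" and "degree K \<le> 2 * d + 1"
  shows "\<exists>Q. degree Q \<le> d \<and> K = pcompose Q [:0, -1, 1:]"
  using assms
proof (induction d arbitrary: K)
  case 0
  have K: "K = [:coeff K 0, coeff K 1:]"
    using "0.prems"(2) by (intro poly_eqI) (auto simp: coeff_pCons coeff_eq_0 split: nat.splits)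
  have "poly K 1 = poly K 0"
    using arg_cong[OF "0.prems"(1), of "\<lambda>p. poly p 0"] by (simp add: poly_pcompose)
  then have "coeff K 1 = 0"
    by (subst (asm) (1 2) K) simp
  then have "K = [:coeff K 0:]"
    using K by simp
  then show ?case by (metis degree_pCons_0 order_refl pcompose_const)
next
  case (Suc d)
  txt \<open>K - K(0) vanishes at 0 and at its reflection 1, so it is divisible by x^2 - x, with a
    quotient that is again invariant.\<close>
  define k0 where "k0 = poly K 0"
  define v :: "'a poly" where "v = [:0, -1, 1:]"
  obtain K1 where K1: "K - [:k0:] = [:0, 1:] * K1"
    using poly_eq_0_iff_dvd[of "K - [:k0:]" 0] by (auto simp: k0_def)
  have "poly K 1 = poly K 0"
    using arg_cong[OF Suc.prems(1), of "\<lambda>p. poly p 0"] by (simp add: poly_pcompose)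
  then have "poly K1 1 = 0"
    using arg_cong[OF K1, of "\<lambda>p. poly p 1"] by (simp add: k0_def)
  then obtain K2 where "K1 = [:-1, 1:] * K2"
    using poly_eq_0_iff_dvd[of K1 1] by auto
  with K1 have K: "K = [:k0:] + v * K2"
    by (simp add: v_def algebra_simps)
  have "pcompose v [:1, -1:] = v"
    by (simp add: v_def pcompose_pCons)
  then have "[:k0:] + v * pcompose K2 [:1, -1:] = [:k0:] + v * K2"
    using Suc.prems(1) K by (metis pcompose_add pcompose_const pcompose_mult)
  then have "v * pcompose K2 [:1, -1:] = v * K2"
    by simp
  then have K2_invariant: "pcompose K2 [:1, -1:] = K2"
    by (subst (asm) mult_left_cancel) (simp_all add: v_def)
  have "degree K2 \<le> 2 * d + 1"
  proof (cases "K2 = 0")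
    case False
    have "degree (v * K2) = 2 + degree K2"
      by (subst degree_mult_eq) (simp_all add: False v_def)
    moreover have "degree (v * K2) \<le> degree K"
      using K degree_diff_le_max[of K "[:k0:]"] by (metis add_diff_cancel_left' degree_pCons_0 max_0R)
    ultimately show ?thesis using Suc.prems(2) by simp
  qed simp
  then obtain Q2 where "degree Q2 \<le> d" "K2 = pcompose Q2 v"
    using Suc.IH[OF K2_invariant] by (auto simp: v_def)
  then show ?case
    using K degree_pCons_le[of k0 Q2]
    by (intro exI[of _ "pCons k0 Q2"]) (simp add: pcompose_pCons v_def)
qed

lemma reflection_antiinvariant_poly:
  fixes D :: "'a :: field_char_0 poly"
  assumes "pcompose D [:1, -1:] = - D" and "degree D \<le> 2 * d + 2"
  shows "\<exists>Q. degree Q \<le> d \<and> D = [:-1, 2:] * pcompose Q [:0, -1, 1:]"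
proof -
  define u :: "'a poly" where "u = [:-1, 2:]"
  have "poly D (1/2) = - poly D (1/2)"
    using arg_cong[OF assms(1), of "\<lambda>p. poly p (1/2)"] by (simp add: poly_pcompose)
  then obtain K0 where "D = [:-(1/2), 1:] * K0"
    using poly_eq_0_iff_dvd[of D "1/2"] by auto
  moreover have "[:-(1/2), 1:] = smult (1/2) u"
    by (simp add: u_def)
  ultimately obtain K where D: "D = u * K"
    by (metis mult_smult_left mult_smult_right)
  have "pcompose u [:1, -1:] = - u"
    by (simp add: u_def pcompose_pCons)
  then have "u * pcompose K [:1, -1:] = u * K"
    using assms(1) D by (simp add: pcompose_mult)
  then have K_invariant: "pcompose K [:1, -1:] = K"
    by (subst (asm) mult_left_cancel) (simp_all add: u_def)
  have "degree K \<le> 2 * d + 1"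
  proof (cases "K = 0")
    case False
    then have "degree D = 1 + degree K"
      unfolding D by (subst degree_mult_eq) (simp_all add: u_def)
    then show ?thesis using assms(2) by simp
  qed simp
  then show ?thesis
    using reflection_invariant_poly[OF K_invariant] D by (auto simp: u_def)
qed

lemma coeff_pcompose_x2_minus_x:
  fixes Q :: "'a :: comm_ring_1 poly"
  shows "coeff (pcompose Q [:0, -1, 1:]) 0 = coeff Q 0"
    and "coeff (pcompose Q [:0, -1, 1:]) 1 = - coeff Q 1"
    and "coeff (pcompose Q [:0, -1, 1:]) 2 = coeff Q 1 + coeff Q 2"
proof -
  obtain a b Q2 where Q: "Q = pCons a (pCons b Q2)"
    by (metis pCons_cases)
  have inner: "coeff (pcompose (pCons b Q2) [:0, -1, 1:]) 0 = b"
    "coeff (pcompose (pCons b Q2) [:0, -1, 1:]) (Suc 0) = - coeff Q2 0"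
    by (simp_all add: pcompose_pCons coeff_mult_1 coeff_mult poly_0_coeff_0)
  show "coeff (pcompose Q [:0, -1, 1:]) 0 = coeff Q 0"
    by (simp add: Q pcompose_pCons coeff_mult)
  show "coeff (pcompose Q [:0, -1, 1:]) 1 = - coeff Q 1"
    using inner by (simp add: Q pcompose_pCons coeff_mult_1)
  show "coeff (pcompose Q [:0, -1, 1:]) 2 = coeff Q 1 + coeff Q 2"
    using inner by (simp add: Q pcompose_pCons coeff_mult_2 numeral_2_eq_2)
qed

lemma coeff_antiinvariant_form:
  fixes Q :: "'a :: comm_ring_1 poly"
  assumes "D = [:-1, 2:] * pcompose Q [:0, -1, 1:]"
  shows "coeff Q 0 = - coeff D 0"
    and "coeff Q 1 = coeff D 1 + 2 * coeff D 0"
    and "coeff Q 2 = - coeff D 2 - 3 * coeff D 1 - 6 * coeff D 0"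
  using coeff_pcompose_x2_minus_x[of Q]
  by (simp_all add: assms coeff_mult coeff_mult_1 coeff_mult_2 numeral_2_eq_2 algebra_simps)

section \<open>Faulhaber polynomials and Bernoulli numbers\<close>

declare bernoulli.simps [simp del]

fun faulhaber :: "nat \<Rightarrow> rat poly" where
  "faulhaber k = smult (1 / of_nat (Suc k))
     (monom 1 (Suc k) - (\<Sum>i<k. smult (of_nat (Suc k choose i)) (faulhaber i)))"

declare faulhaber.simps [simp del]

lemma sum_power_telescope:
  "(\<Sum>a<j. (of_nat a + 1 :: 'a :: comm_ring_1) ^ Suc k - of_nat a ^ Suc k) = of_nat j ^ Suc k"
  by (induction j) (simp_all add: add.commute)

lemma poly_faulhaber: "poly (faulhaber k) (of_nat j) = (\<Sum>a<j. of_nat a ^ k)"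
proof (induction k rule: less_induct)
  case (less k)
  have binomial: "(of_nat a + 1 :: rat) ^ Suc k - of_nat a ^ Suc k
      = (\<Sum>i<Suc k. of_nat (Suc k choose i) * of_nat a ^ i)" for a
    using binomial_ring[of "of_nat a :: rat" 1 "Suc k"]
    by (simp add: atMost_Suc lessThan_Suc_atMost[symmetric] add.commute)
  have "(\<Sum>i<k. of_nat (Suc k choose i) * (\<Sum>a<j. of_nat a ^ i))
      + of_nat (Suc k) * (\<Sum>a<j. of_nat a ^ k)
      = (\<Sum>a<j. \<Sum>i<Suc k. of_nat (Suc k choose i) * (of_nat a :: rat) ^ i)"
    by (simp add: sum_distrib_left sum.swap[of _ "{..<j}"] sum.distrib)
  also have "\<dots> = of_nat j ^ Suc k"
    by (simp only: binomial[symmetric] sum_power_telescope)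
  finally have sums: "(\<Sum>i<k. of_nat (Suc k choose i) * (\<Sum>a<j. of_nat a ^ i))
      + of_nat (Suc k) * (\<Sum>a<j. of_nat a ^ k) = (of_nat j ^ Suc k :: rat)" .
  have "poly (faulhaber k) (of_nat j)
      = (of_nat j ^ Suc k - (\<Sum>i<k. of_nat (Suc k choose i) * (\<Sum>a<j. (of_nat a :: rat) ^ i)))
        / of_nat (Suc k)"
    by (subst faulhaber.simps) (simp add: poly_sum poly_monom less divide_inverse mult.commute)
  also have "\<dots> = (\<Sum>a<j. of_nat a ^ k)"
    using sums by (simp add: field_simps del: of_nat_Suc)
  finally show ?case .
qed

lemma coeff_0_faulhaber: "coeff (faulhaber k) 0 = 0"
  by (induction k rule: less_induct) (subst faulhaber.simps, simp add: coeff_sum)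

lemma coeff_1_faulhaber: "coeff (faulhaber k) 1 = bernoulli k"
proof (induction k rule: less_induct)
  case (less k)
  then have "coeff (faulhaber i) (Suc 0) = bernoulli i" if "i < k" for i
    using that by simp
  then show ?case
    by (subst faulhaber.simps, subst bernoulli.simps)
       (simp add: coeff_sum divide_inverse mult.commute sum_distrib_left)
qed

lemma degree_faulhaber: "degree (faulhaber k) \<le> Suc k"
proof (induction k rule: less_induct)
  case (less k)
  have "degree (\<Sum>i<k. smult (of_nat (Suc k choose i)) (faulhaber i)) \<le> Suc k"
  proof (rule degree_sum_le)
    fix i assume "i \<in> {..<k}"
    then show "degree (smult (of_nat (Suc k choose i)) (faulhaber i)) \<le> Suc k"
      using less[of i] degree_smult_le[of _ "faulhaber i"] by simp
  qed simp
  then have "degree (monom 1 (Suc k) - (\<Sum>i<k. smult (of_nat (Suc k choose i)) (faulhaber i))) \<le> Suc k"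
    using degree_diff_le degree_monom_le by blast
  then show ?case
    by (subst faulhaber.simps) (rule order.trans[OF degree_smult_le])
qed

lemma faulhaber_shift: "pcompose (faulhaber k) [:1, 1:] = faulhaber k + monom 1 k"
proof -
  have "poly (pcompose (faulhaber k) [:1, 1:] - (faulhaber k + monom 1 k)) (of_nat j) = 0" for j
    using poly_faulhaber[of k "Suc j"] poly_faulhaber[of k j]
    by (simp add: poly_pcompose poly_monom add.commute)
  then have "pcompose (faulhaber k) [:1, 1:] - (faulhaber k + monom 1 k) = 0"
    by (rule poly_eq_0_if_nat_roots)
  then show ?thesis by simp
qed

lemma poly_faulhaber_plus_1: "poly (faulhaber k) (x + 1) = poly (faulhaber k) x + x ^ k"
  using arg_cong[OF faulhaber_shift, of "\<lambda>p. poly p x"]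
  by (simp add: poly_pcompose poly_monom add.commute)

lemma faulhaber_reflect:
  assumes "k \<ge> 1"
  shows "pcompose (faulhaber k) [:1, -1:] = smult ((-1) ^ Suc k) (faulhaber k)"
proof -
  define P where "P = poly (faulhaber k)"
  define Z where "Z = pcompose (faulhaber k) [:1, -1:] - smult ((-1) ^ Suc k) (faulhaber k)"
  have poly_Z: "poly Z x = P (1 - x) - (-1) ^ Suc k * P x" for x
    unfolding Z_def P_def by (simp only: poly_diff poly_smult poly_pcompose) simp
  have periodic: "poly Z (x + 1) = poly Z x" for x
  proof -
    have shift: "P (1 - x) = P (- x) + (- x) ^ k" "P (x + 1) = P x + x ^ k"
      using poly_faulhaber_plus_1[of k "- x"] poly_faulhaber_plus_1[of k x] by (simp_all add: P_def)
    have "1 - (x + 1) = - x" by simp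
    then show ?thesis
      unfolding poly_Z shift by (simp add: power_minus[of x] algebra_simps)
  qed
  have Z_0: "poly Z 0 = 0"
    using poly_faulhaber[of k 1] poly_faulhaber[of k 0] assms by (simp add: poly_Z P_def)
  have "poly Z (of_nat j) = 0" for j
  proof (induction j)
    case (Suc j)
    then show ?case using periodic[of "of_nat j"] by (simp add: add.commute)
  qed (simp add: Z_0)
  then have "Z = 0" by (rule poly_eq_0_if_nat_roots)
  then show ?thesis by (simp add: Z_def)
qed

lemma bernoulli_odd_eq_0:
  assumes "odd k" and "k \<ge> 3"
  shows "bernoulli k = 0"
proof -
  have "pcompose [:1, 1:] [:0, -1 :: rat:] = [:1, -1:]" by (simp add: pcompose_pCons)
  then have "smult ((-1) ^ Suc k) (faulhaber k) = pcompose (faulhaber k + monom 1 k) [:0, -1:]"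
    using faulhaber_reflect[of k] assms by (metis faulhaber_shift pcompose_assoc le_trans one_le_numeral)
  then have "coeff (faulhaber k) 1 = - coeff (faulhaber k) 1"
    using assms by (auto simp: coeff_pcompose_linear dest: arg_cong[of _ _ "\<lambda>p. coeff p 1"])
  then show ?thesis using coeff_1_faulhaber[of k] by simp
qed

lemma bernoulli_Suc_0: "bernoulli (Suc 0) = - 1 / 2"
  by (simp add: bernoulli.simps[of "Suc 0"] bernoulli.simps[of 0])

lemma bernoulli_mult_bernoulli_eq_0:
  assumes "even N" and "0 < k" and "Suc k < N"
  shows "bernoulli (Suc k) * bernoulli (N - k) = 0"
proof (cases "even k")
  case True
  then have "Suc k \<ge> 3"
    using assms(2) by presburger
  then show ?thesis using True bernoulli_odd_eq_0[of "Suc k"] by simp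
next
  case False
  then have "odd (N - k)" and "N - k \<ge> 3"
    using assms by presburger+
  then show ?thesis using bernoulli_odd_eq_0[of "N - k"] by simp
qed

section \<open>The coefficients of E at a = 0 as polynomials in j\<close>

lemma a_fps_zero: "a_fps (\<lambda>_. 0) = 0"
  by (simp add: a_fps_def fps_eq_iff)

text \<open>At a = 0, G'/G is minus the sum of the i/(1 + i x) over i < j, and H'/H is minus the sum
  of the k/(1 - k x) over 0 < k < j; below are their r-th coefficients as polynomials in j.\<close>

definition G_logderiv_poly :: "nat \<Rightarrow> rat poly" where
  "G_logderiv_poly r = smult ((-1) ^ Suc r) (faulhaber (Suc r))"

definition H_logderiv_poly :: "nat \<Rightarrow> rat poly" where
  "H_logderiv_poly r = - faulhaber (Suc r)"

lemma coeff_G_logderiv_poly: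
  "coeff (G_logderiv_poly r) 0 = 0" "coeff (G_logderiv_poly r) 1 = (-1) ^ Suc r * bernoulli (Suc r)"
  unfolding G_logderiv_poly_def coeff_smult coeff_0_faulhaber coeff_1_faulhaber by simp_all

lemma coeff_H_logderiv_poly:
  "coeff (H_logderiv_poly r) 0 = 0" "coeff (H_logderiv_poly r) 1 = - bernoulli (Suc r)"
  unfolding H_logderiv_poly_def coeff_minus coeff_0_faulhaber coeff_1_faulhaber by simp_all

lemma G_logderiv_poly_reflect: "pcompose (G_logderiv_poly r) [:1, -1:] = H_logderiv_poly r"
proof -
  have "pcompose (G_logderiv_poly r) [:1, -1:]
      = smult ((-1) ^ Suc r * (-1) ^ Suc (Suc r)) (faulhaber (Suc r))"
    by (simp add: G_logderiv_poly_def pcompose_smult faulhaber_reflect del: power_Suc)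
  also have "(-1 :: rat) ^ Suc r * (-1) ^ Suc (Suc r) = -1"
    by (simp flip: power_add)
  finally show ?thesis by (simp add: H_logderiv_poly_def)
qed

lemma G_fps_zero_nth:
  "G_fps (\<lambda>_. 0) j $ m = poly (exp_int_poly G_logderiv_poly m) (of_nat j)"
proof -
  define f where "f i = inverse (1 + fps_const (of_nat i :: rat) * fps_X)" for i
  define w where "w i = - Abs_fps (\<lambda>r. - ((- of_nat i :: rat) ^ Suc r))" for i
  have G: "G_fps (\<lambda>_. 0) j = (\<Prod>i<j. f i)"
    by (simp add: G_fps_def f_def a_fps_zero fps_of_nat)
  have "fps_deriv (f i) = f i * w i" for i
    unfolding f_def w_def by (rule fps_deriv_inverse_logderiv[OF _ fps_deriv_linear_logderiv]) simp
  then have "fps_deriv (G_fps (\<lambda>_. 0) j) = G_fps (\<lambda>_. 0) j * (\<Sum>i<j. w i)"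
    unfolding G by (intro fps_deriv_prod_logderiv) auto
  moreover have "G_fps (\<lambda>_. 0) j $ 0 = 1"
    by (simp add: G fps_prod_nth_0 f_def)
  moreover have "poly (G_logderiv_poly r) (of_nat j) = (\<Sum>i<j. w i) $ r" for r
    by (simp add: G_logderiv_poly_def w_def fps_sum_nth poly_faulhaber power_minus[of "of_nat _"]
        sum_distrib_left sum_negf mult_ac)
  ultimately show ?thesis by (intro poly_exp_int_poly[symmetric])
qed

lemma H_fps_zero_nth:
  "H_fps (\<lambda>_. 0) j $ m = poly (exp_int_poly H_logderiv_poly m) (of_nat j)"
proof -
  define f where "f i = 1 + fps_const (- of_nat i :: rat) * fps_X" for i
  define w where "w i = Abs_fps (\<lambda>r. - ((- (- of_nat i) :: rat) ^ Suc r))" for i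
  have H: "H_fps (\<lambda>_. 0) j = (\<Prod>i\<in>{1..<j}. f i)"
    by (simp add: H_fps_def f_def a_fps_zero fps_of_nat fps_const_neg[symmetric])
  have "fps_deriv (f i) = f i * w i" for i
    unfolding f_def w_def by (rule fps_deriv_linear_logderiv)
  then have "fps_deriv (H_fps (\<lambda>_. 0) j) = H_fps (\<lambda>_. 0) j * (\<Sum>i\<in>{1..<j}. w i)"
    unfolding H by (intro fps_deriv_prod_logderiv) auto
  moreover have "H_fps (\<lambda>_. 0) j $ 0 = 1"
    by (simp add: H fps_prod_nth_0 f_def)
  moreover have "poly (H_logderiv_poly r) (of_nat j) = (\<Sum>i\<in>{1..<j}. w i) $ r" for r
  proof -
    have "(\<Sum>i\<in>{1..<j}. of_nat i ^ Suc r) = (\<Sum>i<j. of_nat i ^ Suc r :: rat)"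
      by (intro sum.mono_neutral_left) auto
    then show ?thesis
      by (simp add: H_logderiv_poly_def w_def fps_sum_nth poly_faulhaber sum_negf)
  qed
  ultimately show ?thesis by (intro poly_exp_int_poly[symmetric])
qed

text \<open>Indexed like S(N): the coefficient of x^(N-1) in E, that is, of x^(N+1) in G - H.\<close>

definition E_coeff_poly :: "nat \<Rightarrow> rat poly" where
  "E_coeff_poly N = exp_int_poly G_logderiv_poly (Suc N) - exp_int_poly H_logderiv_poly (Suc N)"

lemma E_fps_zero_nth:
  assumes "N \<ge> 1"
  shows "E_fps (\<lambda>_. 0) j $ (N - 1) = poly (E_coeff_poly N) (of_nat j)"
  using assms
  by (simp add: E_fps_def E_coeff_poly_def a_fps_zero G_fps_zero_nth H_fps_zero_nth)

lemma E_coeff_poly_reflect: "pcompose (E_coeff_poly N) [:1, -1:] = - E_coeff_poly N"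
proof -
  have G_to_H: "pcompose (exp_int_poly G_logderiv_poly m) [:1, -1:] = exp_int_poly H_logderiv_poly m" for m
    by (intro pcompose_exp_int_poly G_logderiv_poly_reflect)
  have "pcompose [:1, -1:] [:1, -1:] = [:0, 1 :: rat:]"
    by (simp add: pcompose_pCons)
  then have H_to_G: "pcompose (exp_int_poly H_logderiv_poly m) [:1, -1:] = exp_int_poly G_logderiv_poly m" for m
    by (metis G_to_H pcompose_assoc pcompose_idR)
  show ?thesis
    by (simp add: E_coeff_poly_def pcompose_diff G_to_H H_to_G)
qed

lemma degree_E_coeff_poly: "degree (E_coeff_poly N) \<le> 2 * N + 2"
proof -
  have "degree (G_logderiv_poly r) \<le> r + 2" "degree (H_logderiv_poly r) \<le> r + 2" for r
    using degree_faulhaber[of "Suc r"] degree_smult_le[of _ "faulhaber (Suc r)"]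
    by (auto simp: G_logderiv_poly_def H_logderiv_poly_def)
  then have "degree (exp_int_poly G_logderiv_poly (Suc N)) \<le> 2 * N + 2"
    "degree (exp_int_poly H_logderiv_poly (Suc N)) \<le> 2 * N + 2"
    using degree_exp_int_poly[of _ "Suc N"] by auto
  then show ?thesis
    unfolding E_coeff_poly_def by (rule degree_diff_le)
qed

lemma E_coeff_poly_antiinvariant_form:
  "\<exists>Q. degree Q \<le> N \<and> E_coeff_poly N = [:-1, 2:] * pcompose Q [:0, -1, 1:]"
  using reflection_antiinvariant_poly[OF E_coeff_poly_reflect degree_E_coeff_poly] .

lemma coeff_0_E_coeff_poly: "coeff (E_coeff_poly N) 0 = 0"
  by (simp add: E_coeff_poly_def coeff_0_exp_int_poly coeff_G_logderiv_poly coeff_H_logderiv_poly)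

lemma coeff_1_E_coeff_poly:
  "coeff (E_coeff_poly N) 1 = ((-1) ^ Suc N + 1) * bernoulli (Suc N) / of_nat (Suc N)"
  unfolding E_coeff_poly_def coeff_diff coeff_1_exp_int_poly[OF coeff_G_logderiv_poly(1)]
    coeff_1_exp_int_poly[OF coeff_H_logderiv_poly(1)] coeff_G_logderiv_poly(2) coeff_H_logderiv_poly(2)
  by (simp add: divide_simps algebra_simps del: power_Suc of_nat_Suc)

lemma logderiv_convolution_term:
  assumes "even N" and "k < N"
  shows "coeff (exp_int_poly G_logderiv_poly (Suc k)) 1 * coeff (G_logderiv_poly (N - Suc k)) 1
      - coeff (exp_int_poly H_logderiv_poly (Suc k)) 1 * coeff (H_logderiv_poly (N - Suc k)) 1
    = - 2 * (bernoulli (Suc k) * bernoulli (N - k) / of_nat (Suc k))"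
proof -
  have index: "Suc (N - Suc k) = N - k"
    using assms(2) by simp
  have "(-1 :: rat) ^ Suc k * (-1) ^ (N - k) = (-1) ^ Suc N"
    using assms(2) by (simp flip: power_add)
  then have sign: "(-1 :: rat) ^ Suc k * (-1) ^ (N - k) = -1"
    using assms(1) by simp
  have "coeff (exp_int_poly G_logderiv_poly (Suc k)) 1 * coeff (G_logderiv_poly (N - Suc k)) 1
      - coeff (exp_int_poly H_logderiv_poly (Suc k)) 1 * coeff (H_logderiv_poly (N - Suc k)) 1
    = ((-1) ^ Suc k * bernoulli (Suc k) / of_nat (Suc k)) * ((-1) ^ (N - k) * bernoulli (N - k))
      - (- bernoulli (Suc k) / of_nat (Suc k)) * (- bernoulli (N - k))"
    unfolding coeff_1_exp_int_poly[OF coeff_G_logderiv_poly(1)]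
      coeff_1_exp_int_poly[OF coeff_H_logderiv_poly(1)] coeff_G_logderiv_poly(2)
      coeff_H_logderiv_poly(2) index
    by simp
  also have "\<dots> = ((-1) ^ Suc k * (-1) ^ (N - k) - 1) * (bernoulli (Suc k) * bernoulli (N - k) / of_nat (Suc k))"
    by (simp add: divide_inverse algebra_simps del: power_Suc)
  finally show ?thesis
    unfolding sign by simp
qed

lemma coeff_2_E_coeff_poly_even:
  assumes "even N" and "N \<ge> 2"
  shows "coeff (E_coeff_poly N) 2 = bernoulli N / of_nat N"
proof -
  define t where "t i = coeff (exp_int_poly G_logderiv_poly i) 1 * coeff (G_logderiv_poly (N - i)) 1
      - coeff (exp_int_poly H_logderiv_poly i) 1 * coeff (H_logderiv_poly (N - i)) 1" for i
  obtain M where N: "N = Suc M" using assms(2) by (cases N) auto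
  have "t (Suc k) = (if k = 0 then bernoulli N else 0) + (if k = M then bernoulli N / of_nat N else 0)"
    if "k \<le> M" for k
    using that N logderiv_convolution_term[OF assms(1), of k] bernoulli_mult_bernoulli_eq_0[OF assms(1), of k] assms
    by (auto simp: t_def bernoulli_Suc_0)
  then have "(\<Sum>k=0..M. t (Suc k)) = bernoulli N + bernoulli N / of_nat N"
    by (simp add: sum.distrib)
  moreover have "(\<Sum>i=0..N. t i) = t 0 + (\<Sum>k=0..M. t (Suc k))"
    unfolding N sum.atLeast0_atMost_Suc_shift by (simp add: comp_def)
  moreover have "t 0 = 0"
    by (simp add: t_def)
  moreover have "G_logderiv_poly N = H_logderiv_poly N"
    using assms(1) by (simp add: G_logderiv_poly_def H_logderiv_poly_def)
  then have "coeff (E_coeff_poly N) 2 = (\<Sum>i=0..N. t i) / of_nat (Suc N)"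
    unfolding E_coeff_poly_def coeff_diff t_def
      coeff_2_exp_int_poly[OF coeff_G_logderiv_poly(1)] coeff_2_exp_int_poly[OF coeff_H_logderiv_poly(1)]
    by (simp add: sum_subtractf diff_divide_distrib add_divide_distrib)
  ultimately have "coeff (E_coeff_poly N) 2 = (bernoulli N + bernoulli N / of_nat N) / of_nat (Suc N)"
    by simp
  also have "bernoulli N + bernoulli N / of_nat N = bernoulli N / of_nat N * of_nat (Suc N)"
    using assms(2) by (simp add: field_simps)
  finally show ?thesis
    by (simp del: of_nat_Suc)
qed

lemma E_fps_zero_nth_antiinvariant_form:
  assumes "N \<ge> 1" and "E_coeff_poly N = [:-1, 2:] * pcompose Q [:0, -1, 1:]"
  shows "E_fps (\<lambda>_. 0) j $ (N - 1) = (2 * of_nat j - 1) * poly Q (of_nat j * (of_nat j - 1))"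
  unfolding E_fps_zero_nth[OF assms(1)] assms(2) by (simp add: poly_pcompose algebra_simps)

lemma S_const_coeffs_coeff:
  assumes "N \<ge> 1" and "degree Q \<le> N"
    and "E_coeff_poly N = [:-1, 2:] * pcompose Q [:0, -1, 1:]"
  shows "S_const_coeffs N (coeff Q)"
  unfolding S_const_coeffs_def E_fps_zero_nth_antiinvariant_form[OF assms(1,3)] poly_eq_sum_coeffs[OF assms(2)]
  by simp

lemma S_const_coeffs_unique:
  assumes "N \<ge> 1" and "E_coeff_poly N = [:-1, 2:] * pcompose Q [:0, -1, 1:]"
    and "S_const_coeffs N c" and "i \<le> N"
  shows "c i = coeff Q i"
proof -
  define C where "C = [:c 0:] + (\<Sum>k=1..N. monom (c k) k)"
  define y :: "nat \<Rightarrow> rat" where "y k = of_nat (Suc k * k)" for k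
  have "poly Q (y k) = poly C (y k)" for k
  proof -
    define x :: rat where "x = of_nat (Suc k)"
    have "2 * x - 1 = of_nat (Suc (2 * k))"
      by (simp add: x_def)
    then have nonzero: "2 * x - 1 \<noteq> 0"
      by (simp only: of_nat_eq_0_iff)
    have "(2 * x - 1) * poly Q (x * (x - 1)) = (2 * x - 1) * (c 0 + (\<Sum>i=1..N. c i * (x * (x - 1)) ^ i))"
      using E_fps_zero_nth_antiinvariant_form[OF assms(1,2), of "Suc k"]
        assms(3)[unfolded S_const_coeffs_def, rule_format, of "Suc k"]
      by (simp add: x_def)
    then have "poly Q (x * (x - 1)) = c 0 + (\<Sum>i=1..N. c i * (x * (x - 1)) ^ i)"
      using nonzero by simp
    moreover have "y k = x * (x - 1)"
      by (simp add: y_def x_def algebra_simps)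
    ultimately show ?thesis
      by (simp add: C_def poly_sum poly_monom)
  qed
  moreover have "inj y"
  proof (rule injI)
    fix a b
    assume "y a = y b"
    then have "Suc a * a = Suc b * b"
      by (simp only: y_def of_nat_eq_iff)
    moreover have "strict_mono (\<lambda>k::nat. Suc k * k)"
      unfolding strict_mono_Suc_iff by simp
    ultimately show "a = b"
      using strict_mono_eq[of "\<lambda>k::nat. Suc k * k" a b] by simp
  qed
  ultimately have "Q - C = 0"
    by (intro poly_eq_0_if_roots_inj[of y]) auto
  then have "Q = C"
    by simp
  then show ?thesis
    using assms(4) by (cases i) (simp_all add: C_def coeff_sum coeff_monom)
qed

theorem proposition4p6:
  fixes n :: nat
  assumes "n \<ge> 1"
  shows "(\<exists>c. S_const_coeffs (2 * n) c) \<and> (\<exists>c. S_const_coeffs (2 * n - 1) c) \<and>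
    (\<forall>c. S_const_coeffs (2 * n) c \<longrightarrow>
        c 1 = 0 \<and> c 2 = - bernoulli (2 * n) / (2 * of_nat n)) \<and>
    (\<forall>c. S_const_coeffs (2 * n - 1) c \<longrightarrow> c 1 = bernoulli (2 * n) / of_nat n)"
proof -
  have N: "2 * n \<ge> 1" "2 * n - 1 \<ge> 1" "Suc (2 * n - 1) = 2 * n"
    using assms by auto
  obtain Q where Q: "degree Q \<le> 2 * n" "E_coeff_poly (2 * n) = [:-1, 2:] * pcompose Q [:0, -1, 1:]"
    using E_coeff_poly_antiinvariant_form by blast
  obtain R where R: "degree R \<le> 2 * n - 1"
    "E_coeff_poly (2 * n - 1) = [:-1, 2:] * pcompose R [:0, -1, 1:]"
    using E_coeff_poly_antiinvariant_form by blast
  have "coeff Q 1 = 0" "coeff Q 2 = - bernoulli (2 * n) / (2 * of_nat n)"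
    using coeff_antiinvariant_form[OF Q(2)] coeff_0_E_coeff_poly coeff_1_E_coeff_poly[of "2 * n"]
      coeff_2_E_coeff_poly_even[of "2 * n"] assms
    by simp_all
  moreover have "coeff R 1 = bernoulli (2 * n) / of_nat n"
    using coeff_antiinvariant_form[OF R(2)] coeff_0_E_coeff_poly coeff_1_E_coeff_poly[of "2 * n - 1"] N(3)
    by simp
  moreover have "2 \<le> 2 * n"
    using assms by simp
  ultimately show ?thesis
    using N S_const_coeffs_coeff[OF N(1) Q] S_const_coeffs_coeff[OF N(2) R]
      S_const_coeffs_unique[OF N(1) Q(2)] S_const_coeffs_unique[OF N(2) R(2)]
    by metis
qed

end
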